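(* There is an integer $N$ such that the following holds. Let $H$ be a connected graph with at least $N$ vertices that does not contain a subgraph isomorphic to $S_{4,4}$. Let $y_0$ be a vertex of $H$ with $\deg y_0\ge 4$, and let $y_0y_1y_2y_3y_4$ be a path in $H$ (distinct vertices with $y_i\sim y_{i+1}$). Then: 1. $\deg y_0=4$; 2. $y_0\sim y_2$, $y_0\nsim y_3$, and $y_0\nsim y_4$; 3. if $N(y_0)=\{y_1,y_2,y',y''\}$, then $y_1\nsim y'$ and $y_1\nsim y''$.
   Context: Graphs are finite simple graphs; $\sim$ denotes adjacency, $N(v)$ the set of neighbors of $v$, $\deg v=|N(v)|$. The sparkler graph $S_{4,4}$ is obtained from the star $K_{1,3}$ and the path $P_4$ on 4 vertices by adding an edge between an end vertex of $P_4$ and the central vertex of $K_{1,3}$. *)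

theory Defs
  imports Main
begin

definition sgraph :: "'a set \<Rightarrow> ('a \<Rightarrow> 'a \<Rightarrow> bool) \<Rightarrow> bool" where
  "sgraph V E \<longleftrightarrow> finite V \<and> (\<forall>x y. E x y \<longrightarrow> x \<in> V \<and> y \<in> V)
     \<and> (\<forall>x y. E x y \<longrightarrow> E y x) \<and> (\<forall>x. \<not> E x x)"

definition connected_graph :: "'a set \<Rightarrow> ('a \<Rightarrow> 'a \<Rightarrow> bool) \<Rightarrow> bool" where
  "connected_graph V E \<longleftrightarrow> (\<forall>u\<in>V. \<forall>v\<in>V. E\<^sup>*\<^sup>* u v)"

definition nbhd :: "('a \<Rightarrow> 'a \<Rightarrow> bool) \<Rightarrow> 'a \<Rightarrow> 'a set" where
  "nbhd E v = {u. E v u}"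

definition degree :: "('a \<Rightarrow> 'a \<Rightarrow> bool) \<Rightarrow> 'a \<Rightarrow> nat" where
  "degree E v = card (nbhd E v)"

text \<open>The graph contains a (not necessarily induced) subgraph isomorphic to the
  sparkler S_{4,4}: a centre c with three leaves a1 a2 a3, and a path p1 p2 p3 p4
  with p1 adjacent to c; all eight vertices distinct.\<close>
definition contains_S44 :: "'a set \<Rightarrow> ('a \<Rightarrow> 'a \<Rightarrow> bool) \<Rightarrow> bool" where
  "contains_S44 V E \<longleftrightarrow> (\<exists>c a1 a2 a3 p1 p2 p3 p4.
     set [c, a1, a2, a3, p1, p2, p3, p4] \<subseteq> V \<and> distinct [c, a1, a2, a3, p1, p2, p3, p4] \<and>
     E c a1 \<and> E c a2 \<and> E c a3 \<and> E c p1 \<and> E p1 p2 \<and> E p2 p3 \<and> E p3 p4)"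

end

theory Submission
  imports Defs
begin

text \<open>In a sparkler-free graph a vertex that starts a path with four edges has at most two
  neighbours off that path, hence degree at most 6. So if the conclusion fails,
  W = {y0, ..., y4} \<union> N(y0) has at most 11 vertices, and the failure of the conclusion is
  exactly what lets every vertex of W start a path with four edges inside W. Then every
  vertex of W has at most two neighbours outside W, each of degree at most 6, and
  (using deg y0 \<ge> 4 once more) no path with three edges leaves W. By connectivity every
  vertex lies within distance 2 of W, so |V| \<le> 11 (1 + 2 + 2 \<cdot> 6) = 165.\<close>

lemma contains_S44I:
  assumes "sgraph V E" "distinct [c, a1, a2, a3, p1, p2, p3, p4]"
    "E c a1" "E c a2" "E c a3" "E c p1" "E p1 p2" "E p2 p3" "E p3 p4"
  shows "contains_S44 V E"
proof -
  have "set [c, a1, a2, a3, p1, p2, p3, p4] \<subseteq> V"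
    using assms(1,3-) unfolding sgraph_def by auto
  then show ?thesis unfolding contains_S44_def using assms(2-) by blast
qed

lemma card_UN_le_mult:
  assumes "finite I" "\<And>i. i \<in> I \<Longrightarrow> card (A i) \<le> k"
  shows "card (\<Union>i\<in>I. A i) \<le> card I * k"
proof -
  have "card (\<Union>i\<in>I. A i) \<le> (\<Sum>i\<in>I. card (A i))" using assms(1) by (rule card_UN_le)
  also have "\<dots> \<le> card I * k" using sum_bounded_above[of I "\<lambda>i. card (A i)" k] assms(2) by simp
  finally show ?thesis .
qed

definition path4_in :: "('a \<Rightarrow> 'a \<Rightarrow> bool) \<Rightarrow> 'a set \<Rightarrow> 'a \<Rightarrow> bool" where
  "path4_in E W x \<longleftrightarrow> (\<exists>p1 p2 p3 p4. distinct [x, p1, p2, p3, p4] \<and> {p1, p2, p3, p4} \<subseteq> W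
     \<and> E x p1 \<and> E p1 p2 \<and> E p2 p3 \<and> E p3 p4)"

lemma path4_inI:
  "distinct [x, p1, p2, p3, p4] \<Longrightarrow> {p1, p2, p3, p4} \<subseteq> W \<Longrightarrow>
    E x p1 \<Longrightarrow> E p1 p2 \<Longrightarrow> E p2 p3 \<Longrightarrow> E p3 p4 \<Longrightarrow> path4_in E W x"
  unfolding path4_in_def by blast

locale finite_simple_graph =
  fixes V :: "'a set" and E :: "'a \<Rightarrow> 'a \<Rightarrow> bool"
  assumes sgraph: "sgraph V E"
begin

lemma adj_sym: "E x y \<Longrightarrow> E y x"
  and adj_irrefl: "\<not> E x x"
  and adj_in_V: "E x y \<Longrightarrow> x \<in> V"
  and finite_V: "finite V"
  using sgraph unfolding sgraph_def by blast+

lemma finite_nbhd: "finite (nbhd E v)"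
proof (rule finite_subset[OF _ finite_V])
  show "nbhd E v \<subseteq> V" using adj_in_V adj_sym unfolding nbhd_def by blast
qed

text \<open>The hypotheses put every vertex of a connected graph within distance 2 of W.\<close>
lemma card_V_le_if_no_escape:
  assumes connected: "connected_graph V E" and "finite W" "x0 \<in> W" "x0 \<in> V"
    and out: "\<And>x. x \<in> W \<Longrightarrow> card (nbhd E x - W) \<le> a"
    and near: "\<And>w z. w \<in> W \<Longrightarrow> z \<notin> W \<Longrightarrow> E z w \<Longrightarrow> degree E z \<le> b"
    and no_escape: "\<And>x u1 u2 u3. x \<in> W \<Longrightarrow> {u1, u2, u3} \<inter> W = {} \<Longrightarrow> distinct [u1, u2, u3]
      \<Longrightarrow> E x u1 \<Longrightarrow> E u1 u2 \<Longrightarrow> E u2 u3 \<Longrightarrow> False"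
  shows "card V \<le> card W * (1 + a + a * b)"
proof -
  define N1 where "N1 = (\<Union>x\<in>W. nbhd E x - W)"
  define N2 where "N2 = (\<Union>u\<in>N1. nbhd E u)"
  have N1: "u \<in> N1 \<longleftrightarrow> u \<notin> W \<and> (\<exists>x\<in>W. E x u)" for u
    unfolding N1_def nbhd_def by auto
  have N2: "v \<in> N2 \<longleftrightarrow> (\<exists>u\<in>N1. E u v)" for v
    unfolding N2_def nbhd_def by auto
  have closed: "v' \<in> W \<union> N1 \<union> N2" if "v \<in> W \<union> N1 \<union> N2" "E v v'" for v v'
  proof (rule ccontr)
    assume v': "v' \<notin> W \<union> N1 \<union> N2"
    then have "v \<notin> W" "v \<notin> N1" using that(2) N1 N2 by auto
    with that(1) obtain u x where "u \<in> N1" "E u v" "x \<in> W" "E x u" "u \<notin> W"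
      using N1 N2 by blast
    moreover have "distinct [u, v, v']" using \<open>u \<in> N1\<close> \<open>v \<notin> N1\<close> v' adj_irrefl that(2) by auto
    ultimately show False using no_escape \<open>v \<notin> W\<close> v' that(2) by blast
  qed
  have "V \<subseteq> W \<union> N1 \<union> N2"
  proof
    fix v assume "v \<in> V"
    with connected \<open>x0 \<in> V\<close> have "E\<^sup>*\<^sup>* x0 v" unfolding connected_graph_def by blast
    then show "v \<in> W \<union> N1 \<union> N2"
      by (induction rule: rtranclp_induct) (use \<open>x0 \<in> W\<close> closed in auto)
  qed
  moreover have "finite N1" "finite N2"
    unfolding N1_def N2_def using \<open>finite W\<close> finite_nbhd by auto
  ultimately have "card V \<le> card W + card N1 + card N2"
    using \<open>finite W\<close> by (meson card_Un_le card_mono finite_UnI le_trans add_le_mono1)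
  moreover have "card N1 \<le> card W * a"
    unfolding N1_def using \<open>finite W\<close> out by (rule card_UN_le_mult)
  moreover have "card N2 \<le> card N1 * b"
    unfolding N2_def using \<open>finite N1\<close> near N1 unfolding degree_def
    by (intro card_UN_le_mult) (auto dest: adj_sym)
  ultimately have "card V \<le> card W + card W * a + card W * a * b"
    by (meson add_le_mono order_trans mult_le_mono1 order_refl)
  then show ?thesis by (simp add: algebra_simps)
qed

end

locale sparkler_free = finite_simple_graph +
  assumes S44_free: "\<not> contains_S44 V E"
begin

lemma card_nbhd_Diff_path_le:
  assumes "distinct [c, p1, p2, p3, p4]" "E c p1" "E p1 p2" "E p2 p3" "E p3 p4"
  shows "card (nbhd E c - {p1, p2, p3, p4}) \<le> 2"
proof (rule ccontr)
  assume "\<not> ?thesis"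
  then obtain T where T: "T \<subseteq> nbhd E c - {p1, p2, p3, p4}" "card T = 3"
    using obtain_subset_with_card_n[of 3] by (metis not_le Suc_leI numeral_2_eq_2 numeral_3_eq_3)
  from T(2) obtain a1 a2 a3 where "T = {a1, a2, a3}" "distinct [a1, a2, a3]"
    unfolding card_3_iff by auto
  with T(1) have "E c a1" "E c a2" "E c a3" "distinct [a1, a2, a3]"
    and "{a1, a2, a3} \<inter> {p1, p2, p3, p4} = {}"
    unfolding nbhd_def by auto
  moreover have "c \<notin> {a1, a2, a3}" using \<open>E c a1\<close> \<open>E c a2\<close> \<open>E c a3\<close> adj_irrefl by auto
  ultimately have "contains_S44 V E"
    using assms by (intro contains_S44I[OF sgraph, of c a1 a2 a3 p1 p2 p3 p4]) auto
  with S44_free show False ..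
qed

lemma degree_le_6_of_path:
  assumes "distinct [c, p1, p2, p3, p4]" "E c p1" "E p1 p2" "E p2 p3" "E p3 p4"
  shows "degree E c \<le> 6"
proof -
  have "card (nbhd E c) - card {p1, p2, p3, p4} \<le> card (nbhd E c - {p1, p2, p3, p4})"
    by (rule diff_card_le_card_Diff) simp
  moreover have "card {p1, p2, p3, p4} = 4" using assms(1) by simp
  ultimately show ?thesis
    using card_nbhd_Diff_path_le[OF assms] unfolding degree_def by linarith
qed

text \<open>Otherwise three neighbours of c other than p1 complete a sparkler.\<close>
lemma path_returns_to_nbhd:
  assumes "degree E c \<ge> 4" "distinct [c, p1, p2, p3, p4]" "E c p1" "E p1 p2" "E p2 p3" "E p3 p4"
  shows "E c p2 \<or> E c p3 \<or> E c p4"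
proof (rule ccontr)
  assume "\<not> ?thesis"
  then have "nbhd E c - {p1, p2, p3, p4} = nbhd E c - {p1}" unfolding nbhd_def by auto
  moreover have "p1 \<in> nbhd E c" using assms(3) unfolding nbhd_def by simp
  ultimately have "card (nbhd E c - {p1, p2, p3, p4}) = degree E c - 1"
    using finite_nbhd unfolding degree_def by (simp add: card_Diff_singleton)
  then show False using card_nbhd_Diff_path_le[OF assms(2-)] assms(1) by simp
qed

lemma card_nbhd_Diff_le_2_if_path4_in:
  assumes "path4_in E W x"
  shows "card (nbhd E x - W) \<le> 2"
proof -
  obtain p1 p2 p3 p4 where p: "distinct [x, p1, p2, p3, p4]" "{p1, p2, p3, p4} \<subseteq> W"
    "E x p1" "E p1 p2" "E p2 p3" "E p3 p4"
    using assms unfolding path4_in_def by blast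
  have "card (nbhd E x - W) \<le> card (nbhd E x - {p1, p2, p3, p4})"
    using p(2) finite_nbhd by (intro card_mono) auto
  also have "\<dots> \<le> 2" using card_nbhd_Diff_path_le[OF p(1,3-)] .
  finally show ?thesis .
qed

lemma degree_le_6_if_adj_path4_in:
  assumes "path4_in E W w" "w \<in> W" "z \<notin> W" "E z w"
  shows "degree E z \<le> 6"
proof -
  obtain p1 p2 p3 p4 where p: "distinct [w, p1, p2, p3, p4]" "{p1, p2, p3, p4} \<subseteq> W"
    "E w p1" "E p1 p2" "E p2 p3"
    using assms(1) unfolding path4_in_def by blast
  have "distinct [z, w, p1, p2, p3]" using p(1,2) assms(2,3) by auto
  then show ?thesis using degree_le_6_of_path assms(4) p(3-) by blast
qed

end

locale branch_path = sparkler_free +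
  fixes y0 y1 y2 y3 y4 :: 'a
  assumes degree_y0: "degree E y0 \<ge> 4"
    and path_distinct: "distinct [y0, y1, y2, y3, y4]"
    and path_edges: "E y0 y1" "E y1 y2" "E y2 y3" "E y3 y4"
begin

definition core :: "'a set" where
  "core = {y0, y1, y2, y3, y4} \<union> nbhd E y0"

lemma finite_core: "finite core"
  unfolding core_def using finite_nbhd by simp

lemma y0_adj_path: "E y0 y2 \<or> E y0 y3 \<or> E y0 y4"
  using path_returns_to_nbhd[OF degree_y0 path_distinct path_edges] .

lemma card_core_le_11: "card core \<le> 11"
proof -
  have "card core \<le> card {y0, y1, y2, y3, y4} + degree E y0"
    unfolding core_def degree_def by (rule card_Un_le)
  moreover have "card {y0, y1, y2, y3, y4} = 5" using path_distinct by simp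
  ultimately show ?thesis using degree_le_6_of_path[OF path_distinct path_edges] by simp
qed

lemma degree_y0_eq_4_if_far:
  assumes "\<not> E y0 y3" "\<not> E y0 y4"
  shows "degree E y0 = 4"
proof -
  have "E y0 y2" using y0_adj_path assms by blast
  have "nbhd E y0 - {y1, y2, y3, y4} = nbhd E y0 - {y1, y2}"
    using assms unfolding nbhd_def by auto
  moreover have "card (nbhd E y0 - {y1, y2}) = degree E y0 - 2"
    using path_edges(1) \<open>E y0 y2\<close> path_distinct finite_nbhd unfolding degree_def
    by (subst card_Diff_subset) (auto simp: nbhd_def)
  ultimately show ?thesis
    using card_nbhd_Diff_path_le[OF path_distinct path_edges] degree_y0 by simp
qed

lemma path4_in_core_y2:
  assumes "\<not> (degree E y0 = 4 \<and> E y0 y2 \<and> \<not> E y0 y3 \<and> \<not> E y0 y4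
    \<and> (\<forall>y' y''. nbhd E y0 = {y1, y2, y', y''} \<longrightarrow> \<not> E y1 y' \<and> \<not> E y1 y''))"
  shows "path4_in E core y2"
proof -
  have y: "{y0, y1, y2, y3, y4} \<subseteq> core" unfolding core_def by auto
  have e: "E y1 y0" "E y2 y1" "E y4 y3" using path_edges adj_sym by auto
  consider "E y0 y3" | "E y0 y4" | "\<not> E y0 y3" "\<not> E y0 y4" by blast
  then show ?thesis
  proof cases
    case 1
    then show ?thesis
      using path_distinct y e path_edges by (intro path4_inI[of _ y1 y0 y3 y4]) auto
  next
    case 2
    then show ?thesis
      using path_distinct y e path_edges by (intro path4_inI[of _ y1 y0 y4 y3]) auto
  next
    case 3
    with assms degree_y0_eq_4_if_far y0_adj_path obtain a b
      where ab: "nbhd E y0 = {y1, y2, a, b}" "E y1 a \<or> E y1 b"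
      by blast
    have "distinct [y1, y2, a, b]"
    proof (rule ccontr)
      assume "\<not> distinct [y1, y2, a, b]"
      then have "card {y1, y2, a, b} \<le> 3"
        by (auto simp: card_insert_if card_insert_le insert_commute)
      then show False using ab(1) degree_y0_eq_4_if_far[OF 3] unfolding degree_def by simp
    qed
    moreover have "a \<noteq> y0" "b \<noteq> y0" "E y0 a" "E y0 b" "{a, b} \<subseteq> core"
      using ab(1) adj_irrefl unfolding nbhd_def core_def by blast+
    ultimately show ?thesis
      using ab(2) path_distinct y e adj_sym
      by (elim disjE; intro path4_inI[of _ y1 a y0 b] path4_inI[of _ y1 b y0 a]) auto
  qed
qed

lemma path4_in_core:
  assumes "x \<in> core" "x \<noteq> y2"
  shows "path4_in E core x"
proof -
  have y: "{y0, y1, y2, y3, y4} \<subseteq> core" and nb: "nbhd E y0 \<subseteq> core"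
    unfolding core_def by auto
  have e: "E y1 y0" "E y2 y1" "E y3 y2" "E y4 y3" using path_edges adj_sym by auto
  have "card {y1, y2, y3} < card (nbhd E y0)"
    using degree_y0 unfolding degree_def by (simp add: card_insert_if)
  then obtain t where "t \<in> nbhd E y0" "t \<notin> {y1, y2, y3}"
    by (meson card_mono finite.emptyI finite_insert not_le subsetI)
  then have t: "E y0 t" "t \<in> core" "t \<noteq> y0" "t \<notin> {y1, y2, y3}"
    using nb adj_irrefl unfolding nbhd_def by auto
  have "x \<in> {y0, y1, y3, y4} \<or> E y0 x \<and> x \<notin> {y0, y1, y2, y3, y4}"
    using assms unfolding core_def nbhd_def by auto
  then consider "x = y0" | "x = y1" | "x = y3" | "x = y4"
    | "E y0 x" "x \<notin> {y0, y1, y2, y3, y4}"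
    by blast
  then show ?thesis
  proof cases
    case 1
    then show ?thesis using path_distinct y path_edges by (intro path4_inI[of _ y1 y2 y3 y4]) auto
  next
    case 2
    from y0_adj_path show ?thesis
    proof (elim disjE)
      assume "E y0 y2"
      then show ?thesis
        using 2 path_distinct y e path_edges by (intro path4_inI[of _ y0 y2 y3 y4]) auto
    next
      assume "E y0 y3"
      then show ?thesis
        using 2 path_distinct y t e path_edges adj_sym by (intro path4_inI[of _ y2 y3 y0 t]) auto
    next
      assume "E y0 y4"
      then show ?thesis
        using 2 path_distinct y e path_edges adj_sym by (intro path4_inI[of _ y2 y3 y4 y0]) auto
    qed
  next
    case 3
    then show ?thesis using path_distinct y t e adj_sym by (intro path4_inI[of _ y2 y1 y0 t]) auto
  next
    case 4
    then show ?thesis using path_distinct y e by (intro path4_inI[of _ y3 y2 y1 y0]) auto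
  next
    case 5
    then show ?thesis
      using path_distinct y path_edges adj_sym by (intro path4_inI[of _ y0 y1 y2 y3]) auto
  qed
qed

lemma no_escape_from_core:
  assumes "x \<in> core" "{u1, u2, u3} \<inter> core = {}" "distinct [u1, u2, u3]"
    and "E x u1" "E u1 u2" "E u2 u3"
  shows False
proof -
  have y: "{y0, y1, y2, y3, y4} \<subseteq> core" unfolding core_def by auto
  have far: "\<not> E y0 u1" "\<not> E y0 u2" "\<not> E y0 u3"
    using assms(2) unfolding core_def nbhd_def by auto
  have d: "{u1, u2, u3} \<inter> {y0, y1, y2, y3, y4} = {}" using y assms(2) by blast
  note returns = path_returns_to_nbhd[OF degree_y0]
  have "E y0 x \<or> x = y0 \<or> x = y2 \<or> x = y3 \<or> x = y4"
    using assms(1) path_edges(1) unfolding core_def nbhd_def by auto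
  then consider "E y0 x" | "x = y0" | "x = y2" "\<not> E y0 y2"
    | "x = y3" "\<not> E y0 y3" | "x = y4" "\<not> E y0 y4"
    by blast
  then show False
  proof cases
    case 1
    have "distinct [y0, x, u1, u2, u3]"
      using 1 assms(2,3) far adj_irrefl unfolding core_def nbhd_def by auto
    then show False using returns 1 assms(4-) far by blast
  next
    case 2
    then show False using assms(4) far by blast
  next
    case 3
    have "distinct [y0, y1, y2, u1, u2]" using path_distinct assms(3) d by auto
    then show False using returns path_edges 3 assms(4,5) far by blast
  next
    case 4
    show False
    proof (cases "E y0 y2")
      case True
      have "distinct [y0, y2, y3, u1, u2]" using path_distinct assms(3) d by auto
      then show False using returns True path_edges 4 assms(4,5) far by blast
    next
      case False
      then have "E y0 y4" using y0_adj_path 4 by blast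
      moreover have "distinct [y0, y4, y3, u1, u2]" using path_distinct assms(3) d by auto
      ultimately show False using returns path_edges(4) adj_sym 4 assms(4,5) far by blast
    qed
  next
    case 5
    show False
    proof (cases "E y0 y3")
      case True
      have "distinct [y0, y3, y4, u1, u2]" using path_distinct assms(3) d by auto
      then show False using returns True path_edges 5 assms(4,5) far by blast
    next
      case False
      then have "E y0 y2" using y0_adj_path 5 by blast
      moreover have "distinct [y0, y2, y3, y4, u1]" using path_distinct assms(3) d by auto
      ultimately show False using returns path_edges False 5 assms(4) far by blast
    qed
  qed
qed

lemma card_V_le_165_if_path4_in_core:
  assumes "connected_graph V E" "\<And>x. x \<in> core \<Longrightarrow> path4_in E core x"
  shows "card V \<le> 165"
proof -
  have "y0 \<in> core" "y0 \<in> V" unfolding core_def using adj_in_V path_edges(1) by auto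
  then have "card V \<le> card core * (1 + 2 + 2 * 6)"
    using assms finite_core no_escape_from_core card_nbhd_Diff_le_2_if_path4_in
      degree_le_6_if_adj_path4_in
    by (intro card_V_le_if_no_escape) blast+
  then show ?thesis using card_core_le_11 by simp
qed

end

theorem lemma4:
  shows "\<exists>N::nat. \<forall>(V::nat set) E. sgraph V E \<and> connected_graph V E \<and> card V \<ge> N
    \<and> \<not> contains_S44 V E \<longrightarrow>
    (\<forall>y0 y1 y2 y3 y4. y0 \<in> V \<and> degree E y0 \<ge> 4
       \<and> distinct [y0, y1, y2, y3, y4] \<and> E y0 y1 \<and> E y1 y2 \<and> E y2 y3 \<and> E y3 y4 \<longrightarrow>
       degree E y0 = 4
       \<and> E y0 y2 \<and> \<not> E y0 y3 \<and> \<not> E y0 y4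
       \<and> (\<forall>y' y''. nbhd E y0 = {y1, y2, y', y''} \<longrightarrow> \<not> E y1 y' \<and> \<not> E y1 y''))"
proof (intro exI[of _ 166] allI impI)
  fix V :: "nat set" and E y0 y1 y2 y3 y4
  assume G: "sgraph V E \<and> connected_graph V E \<and> 166 \<le> card V \<and> \<not> contains_S44 V E"
    and P: "y0 \<in> V \<and> 4 \<le> degree E y0 \<and> distinct [y0, y1, y2, y3, y4]
      \<and> E y0 y1 \<and> E y1 y2 \<and> E y2 y3 \<and> E y3 y4"
  interpret branch_path V E y0 y1 y2 y3 y4
    using G P by unfold_locales auto
  show "degree E y0 = 4 \<and> E y0 y2 \<and> \<not> E y0 y3 \<and> \<not> E y0 y4
    \<and> (\<forall>y' y''. nbhd E y0 = {y1, y2, y', y''} \<longrightarrow> \<not> E y1 y' \<and> \<not> E y1 y'')"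
  proof (rule ccontr)
    assume "\<not> ?thesis"
    then have "path4_in E core x" if "x \<in> core" for x
      using that path4_in_core path4_in_core_y2 by blast
    then have "card V \<le> 165" using G card_V_le_165_if_path4_in_core by blast
    with G show False by simp
  qed
qed

end
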